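(* Let $\mathcal A$ be a unital algebra with unit $\mathbf 1$ and let $(\mathbf R_n)_{n\in\mathbb Z}$ be invertible elements of $\mathcal A$ satisfying $$\mathbf R_{n+1}\mathbf R_n^{-1}\mathbf R_{n-1}=\mathbf R_n+\mathbf R_n^{-1}\qquad(n\in\mathbb Z).$$ Then $\mathbf C:=\mathbf R_{n+1}^{-1}\mathbf R_n\mathbf R_{n+1}\mathbf R_n^{-1}$ is independent of $n$, and $$\mathbf K:=(\mathbf R_{n+1}+\mathbf C\mathbf R_{n-1})\mathbf R_n^{-1}=\mathbf R_n^{-1}(\mathbf R_{n+1}\mathbf C+\mathbf R_{n-1})$$ (the two expressions being equal for each $n$) is also independent of $n$. *)

theory Defs
  imports Main
begin

text \<open>The element C_n = R_{n+1}^{-1} R_n R_{n+1} R_n^{-1}, given the sequence R and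
  the sequence Ri of its (two-sided) inverses.\<close>
definition Cel :: "(int \<Rightarrow> 'a::ring_1) \<Rightarrow> (int \<Rightarrow> 'a) \<Rightarrow> int \<Rightarrow> 'a" where
  "Cel R Ri n = Ri (n+1) * R n * R (n+1) * Ri n"

end

theory Submission
  imports Defs
begin

(* Write X_n = R_n + R_n^{-1}; it commutes with R_n.  Multiplying the
   recurrence R_{n+1} R_n^{-1} R_{n-1} = X_n by R_{n-1}^{-1} on the right, resp. by
   R_{n+1}^{-1} on the left, gives the two shift identities
       R_{n+1} R_n^{-1} = X_n R_{n-1}^{-1}      and      R_n^{-1} R_{n-1} = R_{n+1}^{-1} X_n.
   With these, C_n = C_{n-1} is a one-line computation, so C is constant.  Both
   expressions defining K_n reduce to the closed form
       K_n = R_{n+1} R_n^{-1} + R_n^{-1} R_{n-1},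
   and expanding X_n in the shift identities shows K_n = K_{n-1}. *)

lemma shift_invariant_const:
  fixes f :: "int \<Rightarrow> 'b"
  assumes step: "\<And>n. f n = f (n - 1)"
  shows "f n = f m"
proof -
  have "f k = f 0" for k
  proof (induction k rule: int_induct[where k = 0])
    case base then show ?case by simp
  next
    case (step1 i) then show ?case using step[of "i + 1"] by simp
  next
    case (step2 i) then show ?case using step[of i] by simp
  qed
  then show ?thesis by metis
qed

locale inverse_recurrence =
  fixes R Ri :: "int \<Rightarrow> 'a::ring_1"
  assumes inv_r: "\<And>n. R n * Ri n = 1"
      and inv_l: "\<And>n. Ri n * R n = 1"
      and rec: "\<And>n. R (n+1) * Ri n * R (n-1) = R n + Ri n"
begin

definition X :: "int \<Rightarrow> 'a" where
  "X n = R n + Ri n"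

lemma cancel_l: "Ri n * (R n * x) = x"
  by (simp add: mult.assoc[symmetric] inv_l)

lemma X_commute: "R n * X n = X n * R n"
  by (simp add: X_def algebra_simps inv_r inv_l)

lemma X_conj: "R n * X n * Ri n = X n" "Ri n * X n * R n = X n"
proof -
  show "R n * X n * Ri n = X n" by (simp add: X_commute mult.assoc inv_r)
  show "Ri n * X n * R n = X n" by (simp add: X_commute[symmetric] mult.assoc cancel_l)
qed

lemma shift_up: "R (n+1) * Ri n = X n * Ri (n-1)"
proof -
  have "R (n+1) * Ri n = R (n+1) * Ri n * R (n-1) * Ri (n-1)"
    by (simp add: mult.assoc inv_r)
  also have "\<dots> = X n * Ri (n-1)" by (simp add: rec X_def)
  finally show ?thesis .
qed

lemma shift_down: "Ri n * R (n-1) = Ri (n+1) * X n"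
proof -
  have "Ri n * R (n-1) = Ri (n+1) * (R (n+1) * Ri n * R (n-1))"
    by (simp add: mult.assoc cancel_l)
  also have "\<dots> = Ri (n+1) * X n" by (simp add: rec X_def)
  finally show ?thesis .
qed

lemma Cel_step: "Cel R Ri n = Cel R Ri (n-1)"
proof -
  have "Cel R Ri n = Ri (n+1) * R n * (R (n+1) * Ri n)"
    by (simp add: Cel_def mult.assoc)
  also have "\<dots> = Ri (n+1) * (R n * X n) * Ri (n-1)"
    by (simp add: shift_up mult.assoc)
  also have "\<dots> = (Ri (n+1) * X n) * R n * Ri (n-1)"
    by (simp add: X_commute mult.assoc)
  also have "\<dots> = Cel R Ri (n-1)"
    by (simp add: shift_down[symmetric] Cel_def)
  finally show ?thesis .
qed

lemma Cel_const: "Cel R Ri n = Cel R Ri m"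
  using shift_invariant_const[of "Cel R Ri", OF Cel_step] .

definition K :: "int \<Rightarrow> 'a" where
  "K n = R (n+1) * Ri n + Ri n * R (n-1)"

lemma K_left: "(R (n+1) + Cel R Ri n * R (n-1)) * Ri n = K n"
proof -
  have "Cel R Ri n * R (n-1) * Ri n = Ri (n+1) * (R n * X n * Ri n)"
    by (simp add: Cel_def mult.assoc rec[symmetric] X_def)
  also have "\<dots> = Ri n * R (n-1)" by (simp add: X_conj shift_down)
  finally show ?thesis by (simp add: K_def distrib_right)
qed

lemma K_right: "Ri n * (R (n+1) * Cel R Ri n + R (n-1)) = K n"
proof -
  have "Ri n * (R (n+1) * Cel R Ri n) = Ri n * (R (n+1) * Cel R Ri (n-1))"
    by (simp add: Cel_step[symmetric])
  also have "\<dots> = (Ri n * X n * R n) * Ri (n-1)"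
    by (simp add: Cel_def mult.assoc rec[symmetric] X_def)
  also have "\<dots> = R (n+1) * Ri n" by (simp add: X_conj shift_up)
  finally show ?thesis by (simp add: K_def distrib_left)
qed

lemma K_step: "K n = K (n-1)"
proof -
  have up: "R (n+1) * Ri n = R n * Ri (n-1) + Ri n * Ri (n-1)"
    by (simp add: shift_up X_def distrib_right)
  have down: "Ri (n-1) * R (n-1-1) = Ri n * R (n-1) + Ri n * Ri (n-1)"
    using shift_down[of "n-1"] by (simp add: X_def distrib_left)
  show ?thesis unfolding K_def up down by (simp add: algebra_simps)
qed

lemma K_const: "K n = K m"
  using shift_invariant_const[of K, OF K_step] .

end

theorem mainTheorem11:
  fixes R Ri :: "int \<Rightarrow> 'a::ring_1"
  assumes inv_r: "\<And>n. R n * Ri n = 1"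
      and inv_l: "\<And>n. Ri n * R n = 1"
      and rec: "\<And>n. R (n+1) * Ri n * R (n-1) = R n + Ri n"
  shows "(\<forall>n m. Cel R Ri n = Cel R Ri m)
       \<and> (\<forall>n. (R (n+1) + Cel R Ri n * R (n-1)) * Ri n = Ri n * (R (n+1) * Cel R Ri n + R (n-1)))
       \<and> (\<forall>n m. (R (n+1) + Cel R Ri n * R (n-1)) * Ri n = (R (m+1) + Cel R Ri m * R (m-1)) * Ri m)"
proof -
  interpret inverse_recurrence R Ri
    using inv_r inv_l rec by unfold_locales
  show ?thesis
    using Cel_const K_left K_right K_const by simp
qed

end
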